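(* Let $S$ be the graph obtained from nine pairwise vertex-disjoint copies of $J_3$ by identifying the copies of vertex $a$ into a single vertex $a$ and the copies of vertex $b$ into a single vertex $b$ (so the copies of the edge $ab$ become a single edge $ab$), all other vertices staying distinct. Let $H$ be a subgraph of $S$ with maximum degree at most three that contains no edge incident with $a$. Then $S-E(H)$ contains $K_4$ or a member of $\mathcal{J}$ as a subgraph.
   Context: $J_3$ is the graph with vertex set $\{a,b,c,d,e,f,g,h,i,j,k\}$ and edges $ab$; $ac,ad,ae,af,ag$; $bc,bd,be,bf,bg$; $cd,de,ef,fg$; $ha,hd,he$; $ia,ie,if$; $jb,jd,je$; $kb,ke,kf$. $J_1$ is the graph on $\{a,b,c,d,e\}$ with edges $\{ab,ac,bc,ae,be,cd,de,ad\}$, and $J_2$ is the graph on the same vertices with edges $\{ab,ac,bc,ae,be,cd,de,bd\}$. $\mathcal{J}$ is the class of graphs obtained by taking six pairwise vertex-disjoint graphs, each isomorphic to $J_1$ or $J_2$, and identifying all copies of $a$ into one vertex and all copies of $b$ into one vertex (other vertices distinct). *)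

theory Defs
  imports Main
begin

text \<open>Graphs are given by a vertex set and a set of edges, each edge a 2-element set of vertices.\<close>

datatype jv = Ja | Jb | Jc | Jd | Je | Jf | Jg | Jh | Ji | Jj | Jk

definition J3_edges :: "jv set set" where
  "J3_edges = {{Ja,Jb},
     {Ja,Jc},{Ja,Jd},{Ja,Je},{Ja,Jf},{Ja,Jg},
     {Jb,Jc},{Jb,Jd},{Jb,Je},{Jb,Jf},{Jb,Jg},
     {Jc,Jd},{Jd,Je},{Je,Jf},{Jf,Jg},
     {Jh,Ja},{Jh,Jd},{Jh,Je},
     {Ji,Ja},{Ji,Je},{Ji,Jf},
     {Jj,Jb},{Jj,Jd},{Jj,Je},
     {Jk,Jb},{Jk,Je},{Jk,Jf}}"

definition J1_edges :: "jv set set" where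
  "J1_edges = {{Ja,Jb},{Ja,Jc},{Jb,Jc},{Ja,Je},{Jb,Je},{Jc,Jd},{Jd,Je},{Ja,Jd}}"

definition J2_edges :: "jv set set" where
  "J2_edges = {{Ja,Jb},{Ja,Jc},{Jb,Jc},{Ja,Je},{Jb,Je},{Jc,Jd},{Jd,Je},{Jb,Jd}}"

text \<open>Vertices of graphs obtained by gluing copies (indexed by nat) along a and b.\<close>
datatype gv = GA | GB | GV nat jv

definition glue :: "nat \<Rightarrow> jv \<Rightarrow> gv" where
  "glue i x = (if x = Ja then GA else if x = Jb then GB else GV i x)"

definition S_verts :: "gv set" where
  "S_verts = {glue i x | i x. i < 9}"

definition S_edges :: "gv set set" where
  "S_edges = {glue i ` e | i e. i < 9 \<and> e \<in> J3_edges}"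

definition Jcls_verts :: "gv set" where
  "Jcls_verts = {glue i x | i x. i < 6 \<and> x \<in> {Ja,Jb,Jc,Jd,Je}}"

definition Jcls_edges :: "(nat \<Rightarrow> bool) \<Rightarrow> gv set set" where
  "Jcls_edges c = {glue i ` e | i e. i < 6 \<and> e \<in> (if c i then J1_edges else J2_edges)}"

definition contains_copy :: "'b set \<Rightarrow> 'b set set \<Rightarrow> 'a set \<Rightarrow> 'a set set \<Rightarrow> bool" where
  "contains_copy VG EG V E \<longleftrightarrow>
     (\<exists>f. inj_on f VG \<and> f ` VG \<subseteq> V \<and> (\<forall>e\<in>EG. f ` e \<in> E))"

definition contains_K4 :: "'a set \<Rightarrow> 'a set set \<Rightarrow> bool" where
  "contains_K4 V E \<longleftrightarrow> (\<exists>K \<subseteq> V. card K = 4 \<and> (\<forall>x\<in>K. \<forall>y\<in>K. x \<noteq> y \<longrightarrow> {x,y} \<in> E))"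

definition contains_J_member :: "'a set \<Rightarrow> 'a set set \<Rightarrow> bool" where
  "contains_J_member V E \<longleftrightarrow> (\<exists>c. contains_copy Jcls_verts (Jcls_edges c) V E)"

definition degree :: "'a set set \<Rightarrow> 'a \<Rightarrow> nat" where
  "degree E v = card {e \<in> E. v \<in> e}"

end

(*
  At most three of the nine copies of J3 contain an edge of H at b, since H has no edge at a
  and b has degree at most 3 in H; so at least six copies meet H only off a and b. In such a
  copy each edge of the path c-d-e-f-g spans a K4 with a and b, so if S - E(H) contains no K4
  the whole path lies in H. Each of h, j (joined to d and e) and i, k (joined to e and f) can
  only lose an edge to H at d, e or f, and the degree bound leaves room for just one further
  edge of H at each of these three vertices. So one of the four keeps both its edges and spans
  with a and b a copy of J1 (for h, i) or J2 (for j, k); six such copies, glued at a and b,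
  form a member of the class \<J>.
*)

theory Submission
  imports Defs
begin

lemma glue_ab [simp]: "glue i Ja = GA" "glue i Jb = GB"
  by (simp_all add: glue_def)

lemma glue_eq_iff: "glue i x = glue j y \<longleftrightarrow> x = y \<and> (x \<in> {Ja,Jb} \<or> i = j)"
  by (auto simp: glue_def)

lemma inj_glue: "inj (glue i)"
  by (auto intro: injI simp: glue_eq_iff)

lemma finite_J3_edges: "finite J3_edges"
  by (simp add: J3_edges_def)

lemma finite_S_edges: "finite S_edges"
proof -
  have "S_edges = (\<lambda>(i,e). glue i ` e) ` ({..<9} \<times> J3_edges)"
    unfolding S_edges_def by auto
  then show ?thesis
    using finite_J3_edges by (metis finite_SigmaI finite_imageI finite_lessThan)
qed

lemma glue_edge_in_S_edges: "i < 9 \<Longrightarrow> e \<in> J3_edges \<Longrightarrow> glue i ` e \<in> S_edges"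
  unfolding S_edges_def by blast

lemma card_le_degree:
  assumes "finite E" "F \<subseteq> E" "\<forall>e\<in>F. v \<in> e"
  shows "card F \<le> degree E v"
  unfolding degree_def using assms by (intro card_mono) auto

lemma degree_eq_0_outside:
  assumes "\<forall>e\<in>E. e \<subseteq> V" "v \<notin> V"
  shows "degree E v = 0"
proof -
  have empty: "{e \<in> E. v \<in> e} = {}"
    using assms by blast
  show ?thesis
    unfolding degree_def empty by simp
qed

definition edges_in_copy :: "gv set set \<Rightarrow> nat \<Rightarrow> jv set set" where
  "edges_in_copy E i = {e \<in> J3_edges. glue i ` e \<in> E}"

lemma degree_edges_in_copy_le:
  assumes "finite E"
  shows "degree (edges_in_copy E i) v \<le> degree E (glue i v)"
proof -
  have "inj_on (image (glue i)) {e \<in> edges_in_copy E i. v \<in> e}"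
    using inj_glue by (auto intro: inj_onI simp: inj_image_eq_iff)
  moreover have "image (glue i) ` {e \<in> edges_in_copy E i. v \<in> e} \<subseteq> {e \<in> E. glue i v \<in> e}"
    by (auto simp: edges_in_copy_def)
  ultimately show ?thesis
    unfolding degree_def using assms by (intro card_inj_on_le) auto
qed

lemma contains_K4_from_copy:
  assumes "i < 9" "card K = 4"
    and clique: "\<forall>x\<in>K. \<forall>y\<in>K. x \<noteq> y \<longrightarrow> {x,y} \<in> J3_edges - edges_in_copy E i"
  shows "contains_K4 S_verts (S_edges - E)"
  unfolding contains_K4_def
proof (intro exI conjI ballI impI)
  show "glue i ` K \<subseteq> S_verts"
    using \<open>i < 9\<close> by (auto simp: S_verts_def)
  show "card (glue i ` K) = 4"
    using assms(2) card_image[OF inj_on_subset[OF inj_glue subset_UNIV]] by simp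
  fix u v assume "u \<in> glue i ` K" "v \<in> glue i ` K" "u \<noteq> v"
  then obtain x y where "x \<in> K" "y \<in> K" "x \<noteq> y" "u = glue i x" "v = glue i y"
    by auto
  then have "{u,v} = glue i ` {x,y}" "{x,y} \<in> J3_edges - edges_in_copy E i"
    using clique by auto
  then show "{u,v} \<in> S_edges - E"
    using glue_edge_in_S_edges[OF \<open>i < 9\<close>, of "{x,y}"] by (auto simp: edges_in_copy_def)
qed

lemma path_edges_in_copy:
  assumes "\<not> contains_K4 S_verts (S_edges - E)" "i < 9"
    and off_ab: "\<forall>e \<in> edges_in_copy E i. Ja \<notin> e \<and> Jb \<notin> e"
  shows "{{Jc,Jd},{Jd,Je},{Je,Jf},{Jf,Jg}} \<subseteq> edges_in_copy E i"
proof -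
  have ab_edge: "{Ja,Jb} \<in> J3_edges"
    by (simp add: J3_edges_def)
  have "{x,y} \<in> edges_in_copy E i"
    if "{x,y} \<in> J3_edges" "x \<noteq> y" "x \<notin> {Ja,Jb}" "{Ja,x} \<in> J3_edges" "{Jb,x} \<in> J3_edges"
      "y \<notin> {Ja,Jb}" "{Ja,y} \<in> J3_edges" "{Jb,y} \<in> J3_edges" for x y
  proof (rule ccontr)
    assume "{x,y} \<notin> edges_in_copy E i"
    then have "\<forall>u\<in>{Ja,Jb,x,y}. \<forall>w\<in>{Ja,Jb,x,y}. u \<noteq> w \<longrightarrow> {u,w} \<in> J3_edges - edges_in_copy E i"
      using that off_ab ab_edge by (auto simp: insert_commute)
    moreover have "card {Ja,Jb,x,y} = 4"
      using that by auto
    ultimately show False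
      using contains_K4_from_copy assms(1,2) by blast
  qed
  then have "{Jc,Jd} \<in> edges_in_copy E i" "{Jd,Je} \<in> edges_in_copy E i"
    "{Je,Jf} \<in> edges_in_copy E i" "{Jf,Jg} \<in> edges_in_copy E i"
    by (simp_all add: J3_edges_def)
  then show ?thesis
    by simp
qed

definition piece_embedding :: "jv set set \<Rightarrow> (jv \<Rightarrow> jv) \<Rightarrow> bool \<Rightarrow> bool" where
  "piece_embedding R P C \<longleftrightarrow> P Ja = Ja \<and> P Jb = Jb \<and> inj_on P {Ja,Jb,Jc,Jd,Je} \<and>
     (\<forall>e \<in> (if C then J1_edges else J2_edges). P ` e \<in> J3_edges - R)"

lemma piece_embedding_exists:
  assumes fin: "finite R" and deg: "\<forall>v. degree R v \<le> 3"
    and off_ab: "\<forall>e\<in>R. Ja \<notin> e \<and> Jb \<notin> e"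
    and path: "{{Jc,Jd},{Jd,Je},{Je,Jf},{Jf,Jg}} \<subseteq> R"
  shows "\<exists>P C. piece_embedding R P C"
proof -
  have no_four_edges_at: False
    if "{e1,e2,e3,e4} \<subseteq> R" "\<forall>e\<in>{e1,e2,e3,e4}. v \<in> e" "card {e1,e2,e3,e4} = 4"
    for e1 e2 e3 e4 v
    using card_le_degree[OF fin that(1,2)] deg[rule_format, of v] that(3) by linarith
  have at_d: "{Jh,Jd} \<notin> R \<or> {Jj,Jd} \<notin> R"
    using no_four_edges_at[of "{Jc,Jd}" "{Jd,Je}" "{Jh,Jd}" "{Jj,Jd}" Jd] path by (auto simp: doubleton_eq_iff)
  have at_e: "{x,Je} \<notin> R \<or> {y,Je} \<notin> R" if "x \<in> {Jh,Jj}" "y \<in> {Ji,Jk}" for x y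
    using no_four_edges_at[of "{Jd,Je}" "{Je,Jf}" "{x,Je}" "{y,Je}" Je] path that by (auto simp: doubleton_eq_iff)
  have at_f: "{Ji,Jf} \<notin> R \<or> {Jk,Jf} \<notin> R"
    using no_four_edges_at[of "{Je,Jf}" "{Jf,Jg}" "{Ji,Jf}" "{Jk,Jf}" Jf] path by (auto simp: doubleton_eq_iff)
  have via_h: ?thesis if "{Jh,Jd} \<notin> R" "{Jh,Je} \<notin> R"
  proof (intro exI)
    show "piece_embedding R (\<lambda>x. case x of Jc \<Rightarrow> Jd | Jd \<Rightarrow> Jh | _ \<Rightarrow> x) True"
      unfolding piece_embedding_def J1_edges_def J3_edges_def
      using off_ab that by (auto simp: insert_commute inj_on_def)
  qed
  have via_j: ?thesis if "{Jj,Jd} \<notin> R" "{Jj,Je} \<notin> R"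
  proof (intro exI)
    show "piece_embedding R (\<lambda>x. case x of Jc \<Rightarrow> Jd | Jd \<Rightarrow> Jj | _ \<Rightarrow> x) False"
      unfolding piece_embedding_def J2_edges_def J3_edges_def
      using off_ab that by (auto simp: insert_commute inj_on_def)
  qed
  have via_i: ?thesis if "{Ji,Je} \<notin> R" "{Ji,Jf} \<notin> R"
  proof (intro exI)
    show "piece_embedding R (\<lambda>x. case x of Jc \<Rightarrow> Je | Jd \<Rightarrow> Ji | Je \<Rightarrow> Jf | _ \<Rightarrow> x) True"
      unfolding piece_embedding_def J1_edges_def J3_edges_def
      using off_ab that by (auto simp: insert_commute inj_on_def)
  qed
  have via_k: ?thesis if "{Jk,Je} \<notin> R" "{Jk,Jf} \<notin> R"
  proof (intro exI)
    show "piece_embedding R (\<lambda>x. case x of Jc \<Rightarrow> Je | Jd \<Rightarrow> Jk | Je \<Rightarrow> Jf | _ \<Rightarrow> x) False"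
      unfolding piece_embedding_def J2_edges_def J3_edges_def
      using off_ab that by (auto simp: insert_commute inj_on_def)
  qed
  show ?thesis
    using at_d at_e at_f via_h via_j via_i via_k by (metis insert_commute insertCI)
qed

lemma piece_embedding_in_copy:
  assumes "finite E" "\<forall>v. degree E v \<le> 3" "\<forall>e\<in>E. GA \<notin> e"
    and "\<not> contains_K4 S_verts (S_edges - E)" "i < 9" "\<forall>e \<in> edges_in_copy E i. Jb \<notin> e"
  shows "\<exists>P C. piece_embedding (edges_in_copy E i) P C"
proof (rule piece_embedding_exists)
  show "finite (edges_in_copy E i)"
    using finite_J3_edges by (simp add: edges_in_copy_def)
  show "\<forall>v. degree (edges_in_copy E i) v \<le> 3"
    using degree_edges_in_copy_le[OF assms(1)] assms(2) le_trans by blast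
  have "Ja \<notin> e" if "e \<in> edges_in_copy E i" for e
    using that assms(3) unfolding edges_in_copy_def by (metis (mono_tags, lifting) glue_ab(1) imageI mem_Collect_eq)
  then show "\<forall>e\<in>edges_in_copy E i. Ja \<notin> e \<and> Jb \<notin> e"
    using assms(6) by blast
  then show "{{Jc,Jd},{Jd,Je},{Je,Jf},{Jf,Jg}} \<subseteq> edges_in_copy E i"
    using path_edges_in_copy assms(4,5) by blast
qed

lemma J3_edge_subset_ab: "e \<in> J3_edges \<Longrightarrow> e \<subseteq> {Ja,Jb} \<Longrightarrow> e = {Ja,Jb}"
  unfolding J3_edges_def by auto

lemma card_copies_meeting_b_le:
  assumes "finite E" "\<forall>v. degree E v \<le> 3" "\<forall>e\<in>E. GA \<notin> e"
  shows "card {i. i < 9 \<and> (\<exists>e \<in> edges_in_copy E i. Jb \<in> e)} \<le> 3"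
    (is "card ?B \<le> 3")
proof -
  have "\<exists>e. glue i ` e \<in> E \<and> GB \<in> glue i ` e \<and> \<not> e \<subseteq> {Ja,Jb}" if "i \<in> ?B" for i
  proof -
    from that obtain e where "e \<in> J3_edges" "Jb \<in> e" "glue i ` e \<in> E"
      by (auto simp: edges_in_copy_def)
    moreover have "Ja \<notin> e"
      using \<open>glue i ` e \<in> E\<close> assms(3) by (metis glue_ab(1) imageI)
    ultimately have "\<not> e \<subseteq> {Ja,Jb}"
      using J3_edge_subset_ab by blast
    moreover have "GB \<in> glue i ` e"
      using \<open>Jb \<in> e\<close> by (metis glue_ab(2) imageI)
    ultimately show ?thesis
      using \<open>glue i ` e \<in> E\<close> by blast
  qed
  then have "\<forall>i\<in>?B. \<exists>e. glue i ` e \<in> E \<and> GB \<in> glue i ` e \<and> \<not> e \<subseteq> {Ja,Jb}"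
    by blast
  then obtain e where e: "\<forall>i\<in>?B. glue i ` e i \<in> E \<and> GB \<in> glue i ` e i \<and> \<not> e i \<subseteq> {Ja,Jb}"
    by (rule bchoice[elim_format]) blast
  have "inj_on (\<lambda>i. glue i ` e i) ?B"
  proof (rule inj_onI)
    fix i j assume "i \<in> ?B" "j \<in> ?B" and same: "glue i ` e i = glue j ` e j"
    then obtain y where "y \<in> e i" "y \<notin> {Ja,Jb}"
      using e by blast
    moreover from this obtain z where "glue i y = glue j z"
      using same by blast
    ultimately show "i = j"
      by (auto simp: glue_eq_iff)
  qed
  moreover have "(\<lambda>i. glue i ` e i) ` ?B \<subseteq> {e \<in> E. GB \<in> e}"
    using e by auto
  ultimately have "card ?B \<le> degree E GB"
    unfolding degree_def using assms(1) by (intro card_inj_on_le) auto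
  then show ?thesis
    using assms(2) by (meson le_trans)
qed

lemma card_copies_avoiding_b_ge:
  assumes "finite E" "\<forall>v. degree E v \<le> 3" "\<forall>e\<in>E. GA \<notin> e"
  shows "6 \<le> card {i. i < 9 \<and> (\<forall>e \<in> edges_in_copy E i. Jb \<notin> e)}"
    (is "6 \<le> card ?Clean")
proof -
  let ?Bad = "{i. i < 9 \<and> (\<exists>e \<in> edges_in_copy E i. Jb \<in> e)}"
  have "card {..<9::nat} \<le> card (?Clean \<union> ?Bad)"
    by (rule card_mono) auto
  also have "\<dots> \<le> card ?Clean + card ?Bad"
    by (rule card_Un_le)
  also have "\<dots> \<le> card ?Clean + 3"
    using card_copies_meeting_b_le[OF assms] by simp
  finally show ?thesis
    by simp
qed

lemma piece_embedding_fixes_ab: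
  assumes "piece_embedding R P C" "x \<in> {Ja,Jb,Jc,Jd,Je}" "P x \<in> {Ja,Jb}"
  shows "P x = x"
proof -
  have inj: "inj_on P {Ja,Jb,Jc,Jd,Je}" and "P Ja = Ja" "P Jb = Jb"
    using assms(1) unfolding piece_embedding_def by blast+
  then consider "P x = P Ja" | "P x = P Jb"
    using assms(3) by auto
  then show ?thesis
  proof cases
    case 1
    then show ?thesis using inj_onD[OF inj 1 assms(2)] \<open>P Ja = Ja\<close> by simp
  next
    case 2
    then show ?thesis using inj_onD[OF inj 2 assms(2)] \<open>P Jb = Jb\<close> by simp
  qed
qed

definition glue_pieces :: "(nat \<Rightarrow> nat) \<Rightarrow> (nat \<Rightarrow> jv \<Rightarrow> jv) \<Rightarrow> gv \<Rightarrow> gv" where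
  "glue_pieces g P v = (case v of GV k x \<Rightarrow> glue (g k) (P k x) | _ \<Rightarrow> v)"

lemma glue_pieces_glue:
  assumes "\<forall>k<6. piece_embedding (R k) (P k) (C k)" "k < 6"
  shows "glue_pieces g P (glue k x) = glue (g k) (P k x)"
proof -
  have "P k Ja = Ja" "P k Jb = Jb"
    using assms unfolding piece_embedding_def by blast+
  then show ?thesis
    by (simp add: glue_pieces_def glue_def)
qed

lemma inj_on_glue_pieces:
  assumes "inj_on g {..<6}" and pieces: "\<forall>k<6. piece_embedding (R k) (P k) (C k)"
  shows "inj_on (glue_pieces g P) Jcls_verts"
proof (rule inj_onI)
  fix u v assume "u \<in> Jcls_verts" "v \<in> Jcls_verts" and f: "glue_pieces g P u = glue_pieces g P v"
  obtain k x where u: "u = glue k x" "k < 6" "x \<in> {Ja,Jb,Jc,Jd,Je}"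
    using \<open>u \<in> Jcls_verts\<close> unfolding Jcls_verts_def by blast
  obtain k' x' where v: "v = glue k' x'" "k' < 6" "x' \<in> {Ja,Jb,Jc,Jd,Je}"
    using \<open>v \<in> Jcls_verts\<close> unfolding Jcls_verts_def by blast
  have "glue (g k) (P k x) = glue (g k') (P k' x')"
    using f glue_pieces_glue[OF pieces] u v by simp
  then have same: "P k x = P k' x'" and "P k x \<in> {Ja,Jb} \<or> g k = g k'"
    by (auto simp: glue_eq_iff)
  then consider "P k x \<in> {Ja,Jb}" | "k = k'"
    using assms(1) u(2) v(2) by (auto dest: inj_onD)
  then show "u = v"
  proof cases
    case 1
    have "P k x = x"
      using piece_embedding_fixes_ab[OF pieces[rule_format, OF u(2)] u(3) 1] .
    moreover have "P k' x' = x'"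
      using piece_embedding_fixes_ab[OF pieces[rule_format, OF v(2)] v(3)] 1 same by simp
    ultimately show ?thesis
      using u(1) v(1) 1 same by (simp add: glue_eq_iff)
  next
    case 2
    then show ?thesis
      using u v same pieces unfolding piece_embedding_def by (auto dest: inj_onD)
  qed
qed

lemma contains_J_member_from_pieces:
  fixes g :: "nat \<Rightarrow> nat"
  assumes g: "inj_on g {..<6}" "\<forall>k<6. g k < 9"
    and "\<forall>k<6. \<exists>P C. piece_embedding (edges_in_copy E (g k)) P C"
  shows "contains_J_member S_verts (S_edges - E)"
proof -
  obtain P C where pieces: "\<forall>k<6. piece_embedding (edges_in_copy E (g k)) (P k) (C k)"
    using assms(3) by metis
  have "contains_copy Jcls_verts (Jcls_edges C) S_verts (S_edges - E)"
    unfolding contains_copy_def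
  proof (intro exI conjI ballI)
    show "inj_on (glue_pieces g P) Jcls_verts"
      by (rule inj_on_glue_pieces[OF g(1) pieces])
    show "glue_pieces g P ` Jcls_verts \<subseteq> S_verts"
    proof
      fix w assume "w \<in> glue_pieces g P ` Jcls_verts"
      then obtain k x where "k < 6" "w = glue_pieces g P (glue k x)"
        unfolding Jcls_verts_def by blast
      then show "w \<in> S_verts"
        using glue_pieces_glue[OF pieces] g(2)
        unfolding S_verts_def by auto
    qed
    fix e assume "e \<in> Jcls_edges C"
    then obtain k e0 where "e = glue k ` e0" "k < 6" "e0 \<in> (if C k then J1_edges else J2_edges)"
      unfolding Jcls_edges_def by blast
    moreover have "glue_pieces g P ` glue k ` e0 = glue (g k) ` P k ` e0"
      using glue_pieces_glue[OF pieces \<open>k < 6\<close>] by (simp add: image_image)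
    ultimately show "glue_pieces g P ` e \<in> S_edges - E"
      using pieces g(2) glue_edge_in_S_edges
      by (auto simp: piece_embedding_def edges_in_copy_def)
  qed
  then show ?thesis
    unfolding contains_J_member_def by blast
qed

theorem corollary4:
  fixes HV :: "gv set" and HE :: "gv set set"
  assumes "HV \<subseteq> S_verts" and "HE \<subseteq> S_edges" and "\<forall>e\<in>HE. e \<subseteq> HV"
    and "\<forall>v\<in>HV. degree HE v \<le> 3"
    and "\<forall>e\<in>HE. GA \<notin> e"
  shows "contains_K4 S_verts (S_edges - HE) \<or> contains_J_member S_verts (S_edges - HE)"
proof -
  have fin: "finite HE"
    using assms(2) finite_S_edges by (rule finite_subset)
  have deg: "\<forall>v. degree HE v \<le> 3"
    using assms(3,4) degree_eq_0_outside by (metis le0)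
  define Clean where "Clean = {i. i < 9 \<and> (\<forall>e \<in> edges_in_copy HE i. Jb \<notin> e)}"
  obtain g :: "nat \<Rightarrow> nat" where g: "inj_on g {..<6}" "g ` {..<6} \<subseteq> Clean"
    using card_le_inj[of "{..<6::nat}" Clean] card_copies_avoiding_b_ge[OF fin deg assms(5)]
    unfolding Clean_def by auto
  have "contains_J_member S_verts (S_edges - HE)" if "\<not> contains_K4 S_verts (S_edges - HE)"
  proof -
    have "\<forall>k<6. \<exists>P C. piece_embedding (edges_in_copy HE (g k)) P C"
      using piece_embedding_in_copy[OF fin deg assms(5) that] g(2) unfolding Clean_def by blast
    then show ?thesis
      using contains_J_member_from_pieces g unfolding Clean_def by blast
  qed
  then show ?thesis
    by blast
qed

end
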